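(* Given any multiple-unicast network coding problem $\mathcal{I}$ with source-destination pairs $\{ (s_i, t_i), i=1,...,k \}$, the corresponding single-source single-terminal network error correction problem $\mathcal{I}_c=(\mathcal{G},s,t,\mathcal{A})$ constructed as described below, in which $\mathcal{A}$ includes sets with at most a single edge, satisfies: rate $k$ is feasible in $\mathcal{I}_c$ if and only if unit rate is feasible in $\mathcal{I}$.
   Context: A multiple-unicast network coding problem $\mathcal{I}$ is defined on a directed network $\mathcal{N}$ of noiseless point-to-point edges (edge $e$ carries $c_e$ bits per transmission), with $k$ source-destination pairs $(s_i,t_i)$; each source $s_i$ has an independent message uniform over $[2^{nR}]$ (common rate $R$ for all sources), edges apply encoding functions of their tail node's inputs, and terminal $t_i$ decodes the message of $s_i$. Rate $R$ is feasible in $\mathcal{I}$ if for every $\epsilon>0$ there is a code (of some length $n$) under which all terminals decode correctly simultaneously with probability at least $1-\epsilon$ over the uniform messages. The single-source single-terminal network error correction problem $\mathcal{I}_c=(\mathcal{G},s,t,\mathcal{A})$ is built from $\mathcal{I}$ by embedding $\mathcal{N}$ into a larger network $\mathcal{G}$ with a new source $s$ and new terminal $t$, and $k$ parallel branches: for each $i=1,\dots,k$ there are nodes $A_i$, $B_i$ and unit-capacity edges $a_i=(s,A_i)$, $x_i=(A_i,B_i)$, $y_i=(A_i,B_i)$, $z_i=(A_i,s_i)$, $z'_i=(t_i,B_i)$, $b_i=(B_i,t)$. All edges outside $\mathcal{N}$ have unit capacity. The adversary may corrupt (xor an arbitrary error signal onto) at most one edge, which may be any edge of $\mathcal{G}$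 except $a_1,\dots,a_k,b_1,\dots,b_k$; i.e., $\mathcal{A}$ consists of all singleton sets $\{e\}$ with $e\notin\{a_i,b_i: 1\le i\le k\}$. The source message $M$ of rate $R$ is uniform over $[2^{nR}]$; a code satisfies $\mathcal{I}_c$ under message $m$ if $t$ decodes $m$ correctly under every error pattern allowed by $\mathcal{A}$, and it satisfies $\mathcal{I}_c$ with error probability $\epsilon$ if the probability (over $M$) that it satisfies $\mathcal{I}_c$ is at least $1-\epsilon$. Rate $R$ is feasible in $\mathcal{I}_c$ if for every $\epsilon>0$ such a code with error probability at most $\epsilon$ exists. *)

theory Defs
  imports Complex_Main "HOL-Library.FuncSet"
begin

text \<open>A code of length n sends on edge e a symbol from the alphabet {..< asize cap n e},
  i.e. floor(n * c_e) bits.\<close>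

definition asize :: "('e \<Rightarrow> real) \<Rightarrow> nat \<Rightarrow> 'e \<Rightarrow> nat" where
  "asize cap n e = 2 ^ nat \<lfloor>real n * cap e\<rfloor>"

definition msize :: "nat \<Rightarrow> real \<Rightarrow> nat" where
  "msize n R = nat \<lceil>2 powr (real n * R)\<rceil>"

definition local_at ::
  "'e set \<Rightarrow> ('e \<Rightarrow> 'v) \<Rightarrow> nat set \<Rightarrow> (nat \<Rightarrow> 'v) \<Rightarrow> 'v
    \<Rightarrow> (('e \<Rightarrow> nat) \<Rightarrow> (nat \<Rightarrow> nat) \<Rightarrow> 'a) \<Rightarrow> bool" where
  "local_at E hde K src v \<phi> \<longleftrightarrow>
     (\<forall>X Y m m'. (\<forall>e\<in>E. hde e = v \<longrightarrow> X e = Y e) \<longrightarrow> (\<forall>j\<in>K. src j = v \<longrightarrow> m j = m' j)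
        \<longrightarrow> \<phi> X m = \<phi> Y m')"

definition is_code ::
  "'e set \<Rightarrow> ('e \<Rightarrow> 'v) \<Rightarrow> ('e \<Rightarrow> 'v) \<Rightarrow> ('e \<Rightarrow> real) \<Rightarrow> nat
    \<Rightarrow> nat set \<Rightarrow> (nat \<Rightarrow> 'v) \<Rightarrow> nat set \<Rightarrow> (nat \<Rightarrow> 'v)
    \<Rightarrow> ('e \<Rightarrow> ('e \<Rightarrow> nat) \<Rightarrow> (nat \<Rightarrow> nat) \<Rightarrow> nat)
    \<Rightarrow> (nat \<Rightarrow> ('e \<Rightarrow> nat) \<Rightarrow> (nat \<Rightarrow> nat) \<Rightarrow> nat) \<Rightarrow> bool" where
  "is_code E tle hde cap n K src D dst f g \<longleftrightarrow>
     (\<forall>e\<in>E. local_at E hde K src (tle e) (f e) \<and> (\<forall>X m. f e X m < asize cap n e)) \<and>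
     (\<forall>i\<in>D. local_at E hde K src (dst i) (g i))"

text \<open>X is the vector of edge symbols produced by code f under messages m when the error
  signal err is xor-ed onto the edges.  For an acyclic network there is exactly one such X.\<close>

definition consistent ::
  "'e set \<Rightarrow> ('e \<Rightarrow> ('e \<Rightarrow> nat) \<Rightarrow> (nat \<Rightarrow> nat) \<Rightarrow> nat) \<Rightarrow> ('e \<Rightarrow> nat)
    \<Rightarrow> ('e \<Rightarrow> nat) \<Rightarrow> (nat \<Rightarrow> nat) \<Rightarrow> bool" where
  "consistent E f err X m \<longleftrightarrow> (\<forall>e\<in>E. X e = xor (f e X m) (err e))"

definition acyclic_net :: "'e set \<Rightarrow> ('e \<Rightarrow> 'v) \<Rightarrow> ('e \<Rightarrow> 'v) \<Rightarrow> bool" where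
  "acyclic_net E tle hde \<longleftrightarrow> acyclic {(tle e, hde e) | e. e \<in> E}"

text \<open>Feasible: for every eps > 0 there is a code of some length n > 0 such that the fraction of
  message tuples (uniform on [2^{nR}]^k) for which all terminals decode correctly is at least 1-eps.\<close>

definition mu_feasible ::
  "'e set \<Rightarrow> ('e \<Rightarrow> 'v) \<Rightarrow> ('e \<Rightarrow> 'v) \<Rightarrow> ('e \<Rightarrow> real) \<Rightarrow> nat
    \<Rightarrow> (nat \<Rightarrow> 'v) \<Rightarrow> (nat \<Rightarrow> 'v) \<Rightarrow> real \<Rightarrow> bool" where
  "mu_feasible E tle hde cap k s t R \<longleftrightarrow>
     (\<forall>\<epsilon>>0. \<exists>n>0. \<exists>f g. is_code E tle hde cap n {..<k} s {..<k} t f g \<and>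
        real (card {m \<in> Pi\<^sub>E {..<k} (\<lambda>_. {..<msize n R}).
                 \<forall>X. consistent E f (\<lambda>_. 0) X m \<longrightarrow> (\<forall>i<k. g i X m = m i)})
          \<ge> (1 - \<epsilon>) * real (card (Pi\<^sub>E {..<k} (\<lambda>_. {..<msize n R}))))"

definition adm_err :: "('e \<Rightarrow> real) \<Rightarrow> nat \<Rightarrow> 'e set \<Rightarrow> ('e \<Rightarrow> nat) \<Rightarrow> bool" where
  "adm_err cap n adm err \<longleftrightarrow>
     (\<forall>e. err e \<noteq> 0 \<longrightarrow> e \<in> adm \<and> err e < asize cap n e) \<and>
     (\<forall>e e'. err e \<noteq> 0 \<longrightarrow> err e' \<noteq> 0 \<longrightarrow> e = e')"

definition ec_feasible ::
  "'e set \<Rightarrow> ('e \<Rightarrow> 'v) \<Rightarrow> ('e \<Rightarrow> 'v) \<Rightarrow> ('e \<Rightarrow> real) \<Rightarrow> 'v \<Rightarrow> 'v \<Rightarrow> 'e set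
    \<Rightarrow> real \<Rightarrow> bool" where
  "ec_feasible E tle hde cap src snk adm R \<longleftrightarrow>
     (\<forall>\<epsilon>>0. \<exists>n>0. \<exists>f g. is_code E tle hde cap n {0} (\<lambda>_. src) {0} (\<lambda>_. snk) f g \<and>
        real (card {M \<in> {..<msize n R}.
                 \<forall>err X. adm_err cap n adm err \<longrightarrow> consistent E f err X (\<lambda>_. M)
                    \<longrightarrow> g 0 X (\<lambda>_. M) = M})
          \<ge> (1 - \<epsilon>) * real (msize n R))"

datatype 'v gnode = NOld 'v | NS | NT | NA nat | NB nat
datatype 'e gedge = EOld 'e | Ea nat | Ex nat | Ey nat | Ez nat | Ez' nat | Eb nat

definition G_edges :: "'e set \<Rightarrow> nat \<Rightarrow> 'e gedge set" where
  "G_edges E k = EOld ` E \<union> (\<Union>i<k. {Ea i, Ex i, Ey i, Ez i, Ez' i, Eb i})"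

fun G_tl :: "('e \<Rightarrow> 'v) \<Rightarrow> (nat \<Rightarrow> 'v) \<Rightarrow> 'e gedge \<Rightarrow> 'v gnode" where
  "G_tl tle t (EOld e) = NOld (tle e)"
| "G_tl tle t (Ea i) = NS"
| "G_tl tle t (Ex i) = NA i"
| "G_tl tle t (Ey i) = NA i"
| "G_tl tle t (Ez i) = NA i"
| "G_tl tle t (Ez' i) = NOld (t i)"
| "G_tl tle t (Eb i) = NB i"

fun G_hd :: "('e \<Rightarrow> 'v) \<Rightarrow> (nat \<Rightarrow> 'v) \<Rightarrow> 'e gedge \<Rightarrow> 'v gnode" where
  "G_hd hde s (EOld e) = NOld (hde e)"
| "G_hd hde s (Ea i) = NA i"
| "G_hd hde s (Ex i) = NB i"
| "G_hd hde s (Ey i) = NB i"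
| "G_hd hde s (Ez i) = NOld (s i)"
| "G_hd hde s (Ez' i) = NB i"
| "G_hd hde s (Eb i) = NT"

fun G_cap :: "('e \<Rightarrow> real) \<Rightarrow> 'e gedge \<Rightarrow> real" where
  "G_cap cap (EOld e) = cap e"
| "G_cap cap _ = 1"

definition G_adm :: "'e set \<Rightarrow> nat \<Rightarrow> 'e gedge set" where
  "G_adm E k = G_edges E k - (\<Union>i<k. {Ea i, Eb i})"

end

theory Submission
  imports Defs
begin

text \<open>
  If unit rate is feasible in \<open>N\<close>, split the message of \<open>s\<close> into \<open>k\<close> blocks of \<open>n\<close> bits. Block \<open>i\<close>
  travels over \<open>a\<^sub>i\<close> and is copied onto \<open>x\<^sub>i\<close>, \<open>y\<^sub>i\<close> and \<open>z\<^sub>i\<close>; \<open>N\<close> runs the multiple-unicast code with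
  the \<open>z\<^sub>i\<close> as messages, \<open>z'\<^sub>i\<close> carries the estimate of \<open>t\<^sub>i\<close>, and \<open>B\<^sub>i\<close> forwards \<open>x\<^sub>i\<close> if \<open>x\<^sub>i = y\<^sub>i\<close>
  and \<open>z'\<^sub>i\<close> otherwise. A single error either leaves \<open>x\<^sub>i = y\<^sub>i\<close> correct, or corrupts one of them and
  leaves everything else, in particular \<open>N\<close>, clean.

  Conversely, take an error-correcting code decoding a fraction \<open>1 - \<epsilon>\<close> of the messages. Call such a
  message rigid if errors on the edges \<open>x\<^sub>i\<close>, \<open>y\<^sub>i\<close>, \<open>z'\<^sub>i\<close> cannot change the symbols \<open>b\<^sub>1, \<dots>, b\<^sub>k\<close>.
  As \<open>t\<close> sees only these symbols, distinct decodable messages have disjoint sets of possible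
  \<open>b\<close>-vectors, so a fraction \<open>1 - 2\<epsilon>\<close> of the messages is rigid. On a rigid message \<open>b\<^sub>i = \<beta>\<^sub>i(a\<^sub>i)\<close>,
  and comparing a run with corrupted \<open>x\<^sub>i\<close> against a run with corrupted \<open>y\<^sub>i\<close> shows that the symbol
  on \<open>z'\<^sub>i\<close> determines \<open>\<beta>\<^sub>i(a\<^sub>i)\<close>. Thus \<open>t\<^sub>i\<close> recovers \<open>a\<^sub>i\<close> whenever \<open>a\<^sub>i\<close> is a fixed representative of
  its \<open>\<beta>\<^sub>i\<close>-fibre, and a second count shows that this holds for a fraction \<open>1 - 4\<epsilon>\<close> of the vectors of
  \<open>a\<close>-symbols. So \<open>N\<close>, with these symbols as messages and the encoders induced by the code of \<open>G\<close>,
  carries unit rate.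
\<close>

lemma xor_cancel_left: "xor (a::nat) (xor a b) = b"
  by (simp flip: xor.assoc)

lemma xor_eq_self_iff: "xor (a::nat) b = a \<longleftrightarrow> b = 0"
  by (metis xor_cancel_left xor.right_neutral)

lemma xor_less_two_power: "(a::nat) < 2 ^ n \<Longrightarrow> b < 2 ^ n \<Longrightarrow> xor a b < 2 ^ n"
  by (metis take_bit_nat_eq_self_iff take_bit_xor)

lemma inv_into_f_eq_on_representatives:
  "a \<in> inv_into A f ` f ` A \<Longrightarrow> inv_into A f (f a) = a"
  by (auto simp: f_inv_into_f)

lemma card_Int_lower_bound:
  assumes "finite P" "U \<subseteq> P" "Q \<subseteq> P"
  shows "card U + card Q \<le> card P + card (U \<inter> Q)"
proof -
  have "card (U \<union> Q) \<le> card P" using assms by (intro card_mono) auto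
  then show ?thesis using card_Un_Int[of U Q] assms finite_subset by fastforce
qed

lemma card_singleton_fibers_lower_bound:
  assumes "finite P" "finite A" "\<And>a. a \<in> A \<Longrightarrow> C a \<subseteq> P" "\<And>a. a \<in> A \<Longrightarrow> C a \<noteq> {}"
    and "\<And>a b. a \<in> A \<Longrightarrow> b \<in> A \<Longrightarrow> a \<noteq> b \<Longrightarrow> C a \<inter> C b = {}"
  shows "2 * card A \<le> card P + card {a \<in> A. is_singleton (C a)}"
proof -
  define S where "S = {a \<in> A. is_singleton (C a)}"
  have finC: "finite (C a)" if "a \<in> A" for a using assms(1,3) that finite_subset by blast
  have "(\<Sum>a\<in>A. card (C a)) = card (\<Union>a\<in>A. C a)"
    using assms(2,5) finC by (simp add: card_UN_disjoint)
  also have "\<dots> \<le> card P" using assms by (intro card_mono) auto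
  finally have sum_le: "(\<Sum>a\<in>A. card (C a)) \<le> card P" .
  have "2 * card A = (\<Sum>a\<in>A. 2::nat)" by simp
  also have "\<dots> \<le> (\<Sum>a\<in>A. card (C a) + (if a \<in> S then 1 else 0))"
  proof (rule sum_mono)
    fix a assume a: "a \<in> A"
    have "card (C a) \<noteq> 0" using assms(4)[OF a] finC[OF a] by simp
    moreover have "card (C a) = 1 \<longleftrightarrow> a \<in> S" using a by (simp add: S_def is_singleton_altdef)
    ultimately show "2 \<le> card (C a) + (if a \<in> S then 1 else 0)" by auto
  qed
  also have "\<dots> = (\<Sum>a\<in>A. card (C a)) + card S"
    using assms(2) by (simp add: sum.distrib sum.If_cases S_def Int_absorb1 Collect_conj_eq)
  finally show ?thesis using sum_le by (simp add: S_def)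
qed

lemma local_atD:
  "local_at E hde K src v \<phi> \<Longrightarrow> \<forall>e\<in>E. hde e = v \<longrightarrow> X e = Y e
    \<Longrightarrow> \<forall>j\<in>K. src j = v \<longrightarrow> m j = m' j \<Longrightarrow> \<phi> X m = \<phi> Y m'"
  unfolding local_at_def by blast

lemma acyclic_net_consistent_exists:
  assumes "finite E" and "acyclic_net E tle hde"
    and loc: "\<forall>e\<in>E. local_at E hde K src (tle e) (f e)"
  shows "\<exists>X. consistent E f err X m"
proof -
  define r where "r = {(tle e, hde e) | e. e \<in> E}"
  define R where "R = {(e', e). e' \<in> E \<and> e \<in> E \<and> hde e' = tle e}"
  have "finite r" unfolding r_def using \<open>finite E\<close> by (simp add: setcompr_eq_image)
  moreover have "acyclic r" using assms(2) by (simp add: acyclic_net_def r_def)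
  ultimately have "wf r" by (rule finite_acyclic_wf)
  moreover have "R \<subseteq> inv_image r tle" unfolding R_def r_def inv_image_def by auto
  ultimately have wfR: "wf R" using wf_inv_image wf_subset by blast
  define F where "F = (\<lambda>X e. xor (f e X m) (err e))"
  define X where "X = wfrec R F"
  have "X e = xor (f e X m) (err e)" if e: "e \<in> E" for e
  proof -
    have "local_at E hde K src (tle e) (f e)" using loc e by blast
    then have "f e (cut X R e) m = f e X m"
      by (rule local_atD) (use e in \<open>auto simp: R_def cut_apply\<close>)
    moreover have "X e = F (cut X R e) e" unfolding X_def by (rule wfrec[OF wfR])
    ultimately show ?thesis by (simp add: F_def)
  qed
  then show ?thesis unfolding consistent_def by blast
qed

lemma adm_err_outside: "adm_err cap n adm err \<Longrightarrow> e \<notin> adm \<Longrightarrow> err e = 0"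
  by (auto simp: adm_err_def)

lemma adm_err_single: "adm_err cap n adm err \<Longrightarrow> err e \<noteq> 0 \<Longrightarrow> err e' \<noteq> 0 \<Longrightarrow> e' = e"
  by (auto simp: adm_err_def)

definition chunk :: "nat \<Rightarrow> nat \<Rightarrow> nat \<Rightarrow> nat" where
  "chunk n M j = take_bit n (drop_bit (n * j) M)"

definition chunks :: "nat \<Rightarrow> nat \<Rightarrow> nat \<Rightarrow> nat \<Rightarrow> nat" where
  "chunks n k M = restrict (chunk n M) {..<k}"

lemma chunk_less: "chunk n M j < 2 ^ n"
  by (simp add: chunk_def)

lemma take_bit_chunk [simp]: "take_bit n (chunk n M j) = chunk n M j"
  by (simp add: chunk_def)

lemma chunks_eq_imp_eq:
  assumes "M < 2 ^ (n * k)" "M' < 2 ^ (n * k)" "\<forall>j<k. chunk n M j = chunk n M' j"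
  shows "M = M'"
proof (rule bit_eqI)
  fix q
  show "bit M q = bit M' q"
  proof (cases "q < n * k")
    case True
    then have "n > 0" by (cases n) auto
    then have "q div n < k" "q mod n < n" using True
      by (simp_all add: div_less_iff_less_mult mult.commute)
    moreover have "bit (chunk n N (q div n)) (q mod n) = bit N q" for N
      using \<open>n > 0\<close> by (simp add: chunk_def bit_take_bit_iff bit_drop_bit_eq)
    ultimately show ?thesis using assms(3) by metis
  next
    case False
    then have "(2::nat) ^ (n * k) \<le> 2 ^ q" by simp
    then have "M < 2 ^ q" "M' < 2 ^ q" using assms(1,2) by linarith+
    then have "take_bit q M = M" "take_bit q M' = M'" by (simp_all add: take_bit_nat_eq_self_iff)
    then show ?thesis by (metis bit_take_bit_iff less_irrefl)
  qed
qed

lemma card_blocks: "card (Pi\<^sub>E {..<k} (\<lambda>_. {..<(2::nat) ^ n})) = 2 ^ (n * k)"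
  by (simp add: card_PiE power_mult)

lemma bij_betw_chunks: "bij_betw (chunks n k) {..<2 ^ (n * k)} (Pi\<^sub>E {..<k} (\<lambda>_. {..<2 ^ n}))"
proof -
  have inj: "inj_on (chunks n k) {..<2 ^ (n * k)}"
    by (rule inj_onI) (metis chunks_def chunks_eq_imp_eq lessThan_iff restrict_apply')
  have "chunks n k ` {..<2 ^ (n * k)} \<subseteq> Pi\<^sub>E {..<k} (\<lambda>_. {..<2 ^ n})"
    unfolding chunks_def by (rule image_subsetI, rule restrict_PiE_iff[THEN iffD2]) (simp add: chunk_less)
  moreover have "card (chunks n k ` {..<2 ^ (n * k)}) = card (Pi\<^sub>E {..<k} (\<lambda>_. {..<(2::nat) ^ n}))"
    using inj by (simp add: card_image card_blocks)
  ultimately show ?thesis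
    using inj by (simp add: bij_betw_def card_subset_eq finite_PiE)
qed

lemma msize_of_nat: "msize n (real k) = 2 ^ (n * k)"
proof -
  have "(2::real) powr (real n * real k) = 2 ^ (n * k)"
    by (metis of_nat_mult powr_realpow zero_less_numeral)
  then show ?thesis by (simp add: msize_def)
qed

lemma G_edges_iff [simp]:
  "EOld e \<in> G_edges E k \<longleftrightarrow> e \<in> E"
  "Ea i \<in> G_edges E k \<longleftrightarrow> i < k" "Ex i \<in> G_edges E k \<longleftrightarrow> i < k"
  "Ey i \<in> G_edges E k \<longleftrightarrow> i < k" "Ez i \<in> G_edges E k \<longleftrightarrow> i < k"
  "Ez' i \<in> G_edges E k \<longleftrightarrow> i < k" "Eb i \<in> G_edges E k \<longleftrightarrow> i < k"
  by (auto simp: G_edges_def)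

lemma G_adm_iff [simp]:
  "EOld e \<in> G_adm E k \<longleftrightarrow> e \<in> E"
  "Ea i \<notin> G_adm E k" "Ex i \<in> G_adm E k \<longleftrightarrow> i < k"
  "Ey i \<in> G_adm E k \<longleftrightarrow> i < k" "Ez i \<in> G_adm E k \<longleftrightarrow> i < k"
  "Ez' i \<in> G_adm E k \<longleftrightarrow> i < k" "Eb i \<notin> G_adm E k"
  by (auto simp: G_adm_def)

lemma asize_G_cap_EOld [simp]: "asize (G_cap cap) n (EOld e) = asize cap n e"
  by (simp add: asize_def)

lemma asize_G_cap_new: "(\<And>e'. e \<noteq> EOld e') \<Longrightarrow> asize (G_cap cap) n e = 2 ^ n"
  by (cases e) (auto simp: asize_def)

lemma G_hd_neq_NS: "G_hd hde s e \<noteq> NS"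
  by (cases e) auto

lemma G_in_edges_NA: "e \<in> G_edges E k \<Longrightarrow> G_hd hde s e = NA j \<Longrightarrow> e = Ea j"
  by (cases e) auto

lemma G_in_edges_NB: "e \<in> G_edges E k \<Longrightarrow> G_hd hde s e = NB j \<Longrightarrow> e \<in> {Ex j, Ey j, Ez' j}"
  by (cases e) auto

lemma G_in_edges_NT: "e \<in> G_edges E k \<Longrightarrow> G_hd hde s e = NT \<Longrightarrow> \<exists>i<k. e = Eb i"
  by (cases e) auto

lemma G_in_edges_NOld:
  "e \<in> G_edges E k \<Longrightarrow> G_hd hde s e = NOld v \<Longrightarrow>
     (\<exists>e'\<in>E. e = EOld e' \<and> hde e' = v) \<or> (\<exists>j<k. e = Ez j \<and> s j = v)"
  by (cases e) auto

lemma local_at_G_iff: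
  "local_at (G_edges E k) (G_hd hde s) {0} (\<lambda>_. NS) v \<phi> \<longleftrightarrow>
   (\<forall>X Y m m'. (\<forall>e\<in>G_edges E k. G_hd hde s e = v \<longrightarrow> X e = Y e) \<longrightarrow> (v = NS \<longrightarrow> m 0 = m' 0)
      \<longrightarrow> \<phi> X m = \<phi> Y m')"
  by (auto simp: local_at_def)

lemma local_at_G_eq:
  assumes "local_at (G_edges E k) (G_hd hde s) {0} (\<lambda>_. NS) v \<phi>" "v \<noteq> NS"
    and "\<And>e. e \<in> G_edges E k \<Longrightarrow> G_hd hde s e = v \<Longrightarrow> X e = Y e"
  shows "\<phi> X m = \<phi> Y m'"
  using assms unfolding local_at_G_iff by blast

lemma local_at_G_NS_eq:
  assumes "local_at (G_edges E k) (G_hd hde s) {0} (\<lambda>_. NS) NS \<phi>"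
  shows "\<phi> X m = \<phi> Y m"
  using assms G_hd_neq_NS unfolding local_at_G_iff by metis

lemma local_at_N_in_G:
  assumes "local_at E hde {..<k} s v \<phi>"
    and "\<And>e. e \<in> G_edges E k \<Longrightarrow> G_hd hde s e = NOld v \<Longrightarrow> X e = Y e"
  shows "\<phi> (\<lambda>e. X (EOld e)) (\<lambda>j. X (Ez j)) = \<phi> (\<lambda>e. Y (EOld e)) (\<lambda>j. Y (Ez j))"
  using assms(1) by (rule local_atD) (simp_all add: assms(2))

subsection \<open>From a multiple-unicast code to an error-correcting code\<close>

text \<open>The truncations \<open>take_bit n\<close> only keep the encoders inside their alphabets.\<close>

definition ec_enc ::
  "nat \<Rightarrow> ('e \<Rightarrow> ('e \<Rightarrow> nat) \<Rightarrow> (nat \<Rightarrow> nat) \<Rightarrow> nat) \<Rightarrow> (nat \<Rightarrow> ('e \<Rightarrow> nat) \<Rightarrow> (nat \<Rightarrow> nat) \<Rightarrow> nat)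
    \<Rightarrow> 'e gedge \<Rightarrow> ('e gedge \<Rightarrow> nat) \<Rightarrow> (nat \<Rightarrow> nat) \<Rightarrow> nat" where
  "ec_enc n f g e X m = (case e of
     Ea i \<Rightarrow> chunk n (m 0) i
   | Ex i \<Rightarrow> take_bit n (X (Ea i))
   | Ey i \<Rightarrow> take_bit n (X (Ea i))
   | Ez i \<Rightarrow> take_bit n (X (Ea i))
   | EOld e \<Rightarrow> f e (\<lambda>e. X (EOld e)) (\<lambda>j. X (Ez j))
   | Ez' i \<Rightarrow> take_bit n (g i (\<lambda>e. X (EOld e)) (\<lambda>j. X (Ez j)))
   | Eb i \<Rightarrow> take_bit n (if X (Ex i) = X (Ey i) then X (Ex i) else X (Ez' i)))"

definition ec_dec :: "nat \<Rightarrow> nat \<Rightarrow> nat \<Rightarrow> ('e gedge \<Rightarrow> nat) \<Rightarrow> (nat \<Rightarrow> nat) \<Rightarrow> nat" where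
  "ec_dec n k i X m = (SOME M. M < 2 ^ (n * k) \<and> (\<forall>j<k. chunk n M j = X (Eb j)))"

lemma is_code_ec:
  fixes E :: "'e set" and tle hde :: "'e \<Rightarrow> 'v"
  assumes code: "is_code E tle hde cap n {..<k} s {..<k} t f g"
  shows "is_code (G_edges E k) (G_tl tle t) (G_hd hde s) (G_cap cap) n {0} (\<lambda>_. NS) {0} (\<lambda>_. NT)
           (ec_enc n f g) (ec_dec n k)"
  unfolding is_code_def
proof (intro conjI ballI allI)
  fix e X m assume e: "e \<in> G_edges E k"
  show "ec_enc n f g e X m < asize (G_cap cap) n e"
    using code e by (cases e) (auto simp: ec_enc_def asize_G_cap_new chunk_less is_code_def)
  show "local_at (G_edges E k) (G_hd hde s) {0} (\<lambda>_. NS) (G_tl tle t e) (ec_enc n f g e)"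
    unfolding local_at_G_iff
  proof (intro allI impI)
    fix X Y :: "'e gedge \<Rightarrow> nat" and m m' :: "nat \<Rightarrow> nat"
    assume agree: "\<forall>e'\<in>G_edges E k. G_hd hde s e' = G_tl tle t e \<longrightarrow> X e' = Y e'"
      and "G_tl tle t e = NS \<longrightarrow> m 0 = m' 0"
    show "ec_enc n f g e X m = ec_enc n f g e Y m'"
    proof (cases e)
      case (EOld e')
      then have "local_at E hde {..<k} s (tle e') (f e')" using code e by (simp add: is_code_def)
      then have "f e' (\<lambda>e. X (EOld e)) (\<lambda>j. X (Ez j)) = f e' (\<lambda>e. Y (EOld e)) (\<lambda>j. Y (Ez j))"
        by (rule local_at_N_in_G) (use agree EOld in auto)
      then show ?thesis using EOld by (simp add: ec_enc_def)
    next
      case (Ez' i)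
      then have "local_at E hde {..<k} s (t i) (g i)" using code e by (simp add: is_code_def)
      then have "g i (\<lambda>e. X (EOld e)) (\<lambda>j. X (Ez j)) = g i (\<lambda>e. Y (EOld e)) (\<lambda>j. Y (Ez j))"
        by (rule local_at_N_in_G) (use agree Ez' in auto)
      then show ?thesis using Ez' by (simp add: ec_enc_def)
    qed (use agree e \<open>G_tl tle t e = NS \<longrightarrow> m 0 = m' 0\<close> in \<open>simp_all add: ec_enc_def\<close>)
  qed
next
  show "local_at (G_edges E k) (G_hd hde s) {0} (\<lambda>_. NS) NT (ec_dec n k i)" for i
    unfolding local_at_G_iff ec_dec_def by simp
qed

context
  fixes E :: "'e set" and tle hde :: "'e \<Rightarrow> 'v" and cap :: "'e \<Rightarrow> real"
    and k n :: nat and s t :: "nat \<Rightarrow> 'v" and f g and M :: nat and err X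
  assumes code: "is_code E tle hde cap n {..<k} s {..<k} t f g"
    and adm: "adm_err (G_cap cap) n (G_adm E k) err"
    and cons: "consistent (G_edges E k) (ec_enc n f g) err X (\<lambda>_. M)"
begin

lemma ec_run_edge: "e \<in> G_edges E k \<Longrightarrow> X e = xor (ec_enc n f g e X (\<lambda>_. M)) (err e)"
  using cons by (simp add: consistent_def)

lemma ec_run_a: "i < k \<Longrightarrow> X (Ea i) = chunk n M i"
  using ec_run_edge[of "Ea i"] adm_err_outside[OF adm] by (simp add: ec_enc_def)

lemma ec_run_copy:
  "i < k \<Longrightarrow> e \<in> {Ex i, Ey i, Ez i} \<Longrightarrow> X e = xor (chunk n M i) (err e)"
  using ec_run_edge[of e] ec_run_a by (auto simp: ec_enc_def)

lemma ec_run_b: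
  "i < k \<Longrightarrow> X (Eb i) = take_bit n (if X (Ex i) = X (Ey i) then X (Ex i) else X (Ez' i))"
  using ec_run_edge[of "Eb i"] adm_err_outside[OF adm] by (simp add: ec_enc_def)

lemma ec_run_inner:
  assumes clean: "\<forall>e. err e \<noteq> 0 \<longrightarrow> e \<in> {Ex i, Ey i}" and i: "i < k"
  shows "consistent E f (\<lambda>_. 0) (\<lambda>e. X (EOld e)) (chunks n k M)"
    and "X (Ez' i) = take_bit n (g i (\<lambda>e. X (EOld e)) (chunks n k M))"
proof -
  have "X (Ez j) = chunk n M j" if "j < k" for j
  proof -
    have "err (Ez j) = 0" using clean by blast
    then show ?thesis using ec_run_copy[OF that, of "Ez j"] by simp
  qed
  then have z: "\<forall>j\<in>{..<k}. s j = v \<longrightarrow> X (Ez j) = chunks n k M j" for v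
    by (simp add: chunks_def)
  show "consistent E f (\<lambda>_. 0) (\<lambda>e. X (EOld e)) (chunks n k M)"
    unfolding consistent_def
  proof
    fix e assume e: "e \<in> E"
    then have "local_at E hde {..<k} s (tle e) (f e)" using code by (simp add: is_code_def)
    then have "f e (\<lambda>e. X (EOld e)) (\<lambda>j. X (Ez j)) = f e (\<lambda>e. X (EOld e)) (chunks n k M)"
      by (rule local_atD) (simp_all add: z)
    moreover have "err (EOld e) = 0" using clean by blast
    ultimately show "X (EOld e) = xor (f e (\<lambda>e. X (EOld e)) (chunks n k M)) 0"
      using ec_run_edge[of "EOld e"] e by (simp add: ec_enc_def)
  qed
  have "local_at E hde {..<k} s (t i) (g i)" using code i by (simp add: is_code_def)
  then have "g i (\<lambda>e. X (EOld e)) (\<lambda>j. X (Ez j)) = g i (\<lambda>e. X (EOld e)) (chunks n k M)"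
    by (rule local_atD) (simp_all add: z)
  moreover have "err (Ez' i) = 0" using clean by blast
  ultimately show "X (Ez' i) = take_bit n (g i (\<lambda>e. X (EOld e)) (chunks n k M))"
    using ec_run_edge[of "Ez' i"] i by (simp add: ec_enc_def)
qed

text \<open>A single error either leaves \<open>x\<^sub>i\<close> and \<open>y\<^sub>i\<close> equal and correct, or corrupts one of them,
  in which case the rest of the network, in particular \<open>N\<close>, is clean and \<open>z'\<^sub>i\<close> is correct.\<close>

lemma ec_run_delivers_chunk:
  assumes good: "\<forall>X. consistent E f (\<lambda>_. 0) X (chunks n k M) \<longrightarrow>
                      (\<forall>j<k. g j X (chunks n k M) = chunks n k M j)"
    and i: "i < k"
  shows "X (Eb i) = chunk n M i"
proof (cases "err (Ex i) = 0 \<and> err (Ey i) = 0")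
  case True
  then have "X (Ex i) = chunk n M i" "X (Ey i) = chunk n M i" using ec_run_copy[OF i] by simp_all
  then show ?thesis using ec_run_b[OF i] by simp
next
  case False
  then obtain e0 where e0: "e0 \<in> {Ex i, Ey i}" "err e0 \<noteq> 0" by auto
  have others: "e \<noteq> e0 \<Longrightarrow> err e = 0" for e using adm_err_single[OF adm e0(2), of e] by auto
  then have clean: "\<forall>e. err e \<noteq> 0 \<longrightarrow> e \<in> {Ex i, Ey i}" using e0(1) by metis
  have "X (Ex i) \<noteq> X (Ey i)"
  proof -
    have "X e0 = xor (chunk n M i) (err e0)" using ec_run_copy[OF i, of e0] e0(1) by auto
    then have corrupted: "X e0 \<noteq> chunk n M i" using e0(2) xor_eq_self_iff by metis
    have intact: "X e = chunk n M i" if "e \<in> {Ex i, Ey i}" "e \<noteq> e0" for e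
      using ec_run_copy[OF i, of e] that others[OF that(2)] by auto
    from e0(1) consider "e0 = Ex i" | "e0 = Ey i" by blast
    then show ?thesis
      by cases (use corrupted intact[of "Ex i"] intact[of "Ey i"] in simp_all)
  qed
  moreover have "g i (\<lambda>e. X (EOld e)) (chunks n k M) = chunks n k M i"
    using good ec_run_inner(1)[OF clean i] i by blast
  then have "X (Ez' i) = chunk n M i" using ec_run_inner(2)[OF clean i] i by (simp add: chunks_def)
  ultimately show ?thesis using ec_run_b[OF i] by simp
qed

end

lemma ec_dec_correct:
  assumes code: "is_code E tle hde cap n {..<k} s {..<k} t f g"
    and M: "M < 2 ^ (n * k)"
    and good: "\<forall>X. consistent E f (\<lambda>_. 0) X (chunks n k M) \<longrightarrow>
                    (\<forall>j<k. g j X (chunks n k M) = chunks n k M j)"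
    and adm: "adm_err (G_cap cap) n (G_adm E k) err"
    and cons: "consistent (G_edges E k) (ec_enc n f g) err X (\<lambda>_. M)"
  shows "ec_dec n k 0 X (\<lambda>_. M) = M"
  unfolding ec_dec_def
proof (rule some_equality)
  have "\<forall>j<k. X (Eb j) = chunk n M j" using ec_run_delivers_chunk[OF code adm cons good] by blast
  then show "M < 2 ^ (n * k) \<and> (\<forall>j<k. chunk n M j = X (Eb j))" using M by simp
  then show "M' < 2 ^ (n * k) \<and> (\<forall>j<k. chunk n M' j = X (Eb j)) \<Longrightarrow> M' = M" for M'
    using M chunks_eq_imp_eq[of M' n k M] by simp
qed

lemma ec_feasible_if_mu_feasible:
  fixes E :: "'e set" and tle hde :: "'e \<Rightarrow> 'v"
  assumes "mu_feasible E tle hde cap k s t 1"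
  shows "ec_feasible (G_edges E k) (G_tl tle t) (G_hd hde s) (G_cap cap) NS NT (G_adm E k) (real k)"
  unfolding ec_feasible_def
proof (intro allI impI)
  fix \<epsilon> :: real assume "\<epsilon> > 0"
  then obtain n f g where n: "n > 0" and code: "is_code E tle hde cap n {..<k} s {..<k} t f g"
    and card: "(1 - \<epsilon>) * real (card (Pi\<^sub>E {..<k} (\<lambda>_. {..<msize n 1}))) \<le>
      real (card {m \<in> Pi\<^sub>E {..<k} (\<lambda>_. {..<msize n 1}).
                   \<forall>X. consistent E f (\<lambda>_. 0) X m \<longrightarrow> (\<forall>i<k. g i X m = m i)})"
    using assms unfolding mu_feasible_def by blast
  define S where "S = {m \<in> Pi\<^sub>E {..<k} (\<lambda>_. {..<2 ^ n}).
                   \<forall>X. consistent E f (\<lambda>_. 0) X m \<longrightarrow> (\<forall>i<k. g i X m = m i)}"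
  define correct where "correct = {M \<in> {..<2 ^ (n * k)}. \<forall>err X. adm_err (G_cap cap) n (G_adm E k) err
     \<longrightarrow> consistent (G_edges E k) (ec_enc n f g) err X (\<lambda>_. M) \<longrightarrow> ec_dec n k 0 X (\<lambda>_. M) = M}"
  have "S \<subseteq> chunks n k ` correct"
  proof
    fix m assume m: "m \<in> S"
    then have "m \<in> chunks n k ` {..<2 ^ (n * k)}"
      using bij_betw_imp_surj_on[OF bij_betw_chunks] by (simp add: S_def)
    then obtain M where M: "M < 2 ^ (n * k)" "m = chunks n k M" by auto
    then have "M \<in> correct" using m ec_dec_correct[OF code M(1)] unfolding S_def correct_def by blast
    then show "m \<in> chunks n k ` correct" using M(2) by blast
  qed
  then have "card S \<le> card correct"
    using card_image_le[of correct "chunks n k"] card_mono[of "chunks n k ` correct" S]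
    unfolding correct_def by fastforce
  then have "(1 - \<epsilon>) * real (msize n (real k)) \<le> real (card correct)"
    using card msize_of_nat[of n 1] msize_of_nat[of n k] card_blocks[of k n] unfolding S_def by simp
  then show "\<exists>n>0. \<exists>f g. is_code (G_edges E k) (G_tl tle t) (G_hd hde s) (G_cap cap) n {0} (\<lambda>_. NS) {0} (\<lambda>_. NT) f g \<and>
        real (card {M \<in> {..<msize n (real k)}.
                 \<forall>err X. adm_err (G_cap cap) n (G_adm E k) err \<longrightarrow> consistent (G_edges E k) f err X (\<lambda>_. M)
                    \<longrightarrow> g 0 X (\<lambda>_. M) = M})
          \<ge> (1 - \<epsilon>) * real (msize n (real k))"
    using n is_code_ec[OF code] unfolding correct_def msize_of_nat by blast
qed

subsection \<open>From an error-correcting code to a multiple-unicast code\<close>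

locale G_code =
  fixes E :: "'e set" and tle hde :: "'e \<Rightarrow> 'v" and cap :: "'e \<Rightarrow> real"
    and k n :: nat and s t :: "nat \<Rightarrow> 'v"
    and F :: "'e gedge \<Rightarrow> ('e gedge \<Rightarrow> nat) \<Rightarrow> (nat \<Rightarrow> nat) \<Rightarrow> nat"
    and Gd :: "nat \<Rightarrow> ('e gedge \<Rightarrow> nat) \<Rightarrow> (nat \<Rightarrow> nat) \<Rightarrow> nat"
  assumes code: "is_code (G_edges E k) (G_tl tle t) (G_hd hde s) (G_cap cap) n {0} (\<lambda>_. NS) {0} (\<lambda>_. NT) F Gd"
begin

lemma F_local: "e \<in> G_edges E k \<Longrightarrow> local_at (G_edges E k) (G_hd hde s) {0} (\<lambda>_. NS) (G_tl tle t e) (F e)"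
  using code by (simp add: is_code_def)

lemma F_less: "e \<in> G_edges E k \<Longrightarrow> F e X m < asize (G_cap cap) n e"
  using code by (simp add: is_code_def)

text \<open>By locality each encoder of \<open>G\<close> is a function of its in-edges alone. The symbols \<open>u\<^sub>j\<close> on the
  edges \<open>a\<^sub>j\<close> play the role of the messages of \<open>N\<close>: \<open>enc_N\<close> and \<open>sym_z'\<close> are the encoders of \<open>N\<close>
  and of the edges \<open>z'\<^sub>i\<close> obtained by feeding \<open>z\<^sub>j\<close> its value determined by \<open>u\<^sub>j\<close>.\<close>

definition sym_a :: "nat \<Rightarrow> nat \<Rightarrow> nat" where
  "sym_a j M = F (Ea j) (\<lambda>_. 0) (\<lambda>_. M)"

definition sym_x :: "nat \<Rightarrow> nat \<Rightarrow> nat" where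
  "sym_x j a = F (Ex j) ((\<lambda>_. 0)(Ea j := a)) (\<lambda>_. 0)"

definition sym_y :: "nat \<Rightarrow> nat \<Rightarrow> nat" where
  "sym_y j a = F (Ey j) ((\<lambda>_. 0)(Ea j := a)) (\<lambda>_. 0)"

definition sym_z :: "nat \<Rightarrow> nat \<Rightarrow> nat" where
  "sym_z j a = F (Ez j) ((\<lambda>_. 0)(Ea j := a)) (\<lambda>_. 0)"

definition lift :: "('e \<Rightarrow> nat) \<Rightarrow> (nat \<Rightarrow> nat) \<Rightarrow> 'e gedge \<Rightarrow> nat" where
  "lift X u = (\<lambda>e. case e of EOld e \<Rightarrow> X e | Ez j \<Rightarrow> sym_z j (u j) | _ \<Rightarrow> 0)"

definition enc_N :: "'e \<Rightarrow> ('e \<Rightarrow> nat) \<Rightarrow> (nat \<Rightarrow> nat) \<Rightarrow> nat" where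
  "enc_N e X u = F (EOld e) (lift X u) (\<lambda>_. 0)"

definition sym_z' :: "nat \<Rightarrow> ('e \<Rightarrow> nat) \<Rightarrow> (nat \<Rightarrow> nat) \<Rightarrow> nat" where
  "sym_z' i X u = F (Ez' i) (lift X u) (\<lambda>_. 0)"

definition sym_b :: "nat \<Rightarrow> nat \<Rightarrow> nat \<Rightarrow> nat \<Rightarrow> nat" where
  "sym_b j x y z = F (Eb j) ((\<lambda>_. 0)(Ex j := x, Ey j := y, Ez' j := z)) (\<lambda>_. 0)"

definition dec_T :: "(nat \<Rightarrow> nat) \<Rightarrow> nat" where
  "dec_T c = Gd 0 (\<lambda>e. case e of Eb i \<Rightarrow> c i | _ \<Rightarrow> 0) (\<lambda>_. 0)"

definition a_vec :: "nat \<Rightarrow> nat \<Rightarrow> nat" where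
  "a_vec M = restrict (\<lambda>j. sym_a j M) {..<k}"

definition b_vec :: "(nat \<Rightarrow> nat) \<Rightarrow> ('e \<Rightarrow> nat) \<Rightarrow> ('e gedge \<Rightarrow> nat) \<Rightarrow> nat \<Rightarrow> nat" where
  "b_vec u X err = restrict (\<lambda>j. sym_b j (xor (sym_x j (u j)) (err (Ex j)))
     (xor (sym_y j (u j)) (err (Ey j))) (xor (sym_z' j X u) (err (Ez' j)))) {..<k}"

definition run :: "nat \<Rightarrow> ('e \<Rightarrow> nat) \<Rightarrow> ('e gedge \<Rightarrow> nat) \<Rightarrow> 'e gedge \<Rightarrow> nat" where
  "run M X err = (\<lambda>e. case e of
     Ea j \<Rightarrow> sym_a j M
   | Ex j \<Rightarrow> xor (sym_x j (sym_a j M)) (err (Ex j))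
   | Ey j \<Rightarrow> xor (sym_y j (sym_a j M)) (err (Ey j))
   | Ez j \<Rightarrow> sym_z j (sym_a j M)
   | EOld e \<Rightarrow> X e
   | Ez' j \<Rightarrow> xor (sym_z' j X (a_vec M)) (err (Ez' j))
   | Eb j \<Rightarrow> b_vec (a_vec M) X err j)"

lemma local_at_lift:
  assumes "e \<in> G_edges E k" "G_tl tle t e = NOld v"
  shows "local_at E hde {..<k} s v (\<lambda>X u. F e (lift X u) (\<lambda>_. 0))"
  unfolding local_at_def
proof (intro allI impI)
  fix X Y :: "'e \<Rightarrow> nat" and u u' :: "nat \<Rightarrow> nat"
  assume X: "\<forall>e\<in>E. hde e = v \<longrightarrow> X e = Y e" and u: "\<forall>j\<in>{..<k}. s j = v \<longrightarrow> u j = u' j"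
  have "local_at (G_edges E k) (G_hd hde s) {0} (\<lambda>_. NS) (NOld v) (F e)"
    using F_local[OF assms(1)] assms(2) by simp
  then show "F e (lift X u) (\<lambda>_. 0) = F e (lift Y u') (\<lambda>_. 0)"
  proof (rule local_at_G_eq)
    fix e' assume "e' \<in> G_edges E k" "G_hd hde s e' = NOld v"
    from G_in_edges_NOld[OF this] show "lift X u e' = lift Y u' e'"
      using X u by (elim disjE bexE exE conjE) (simp_all add: lift_def)
  qed simp
qed

lemma enc_N_local: "e \<in> E \<Longrightarrow> local_at E hde {..<k} s (tle e) (enc_N e)"
  using local_at_lift[of "EOld e" "tle e"] unfolding enc_N_def by simp

lemma sym_z'_local: "i < k \<Longrightarrow> local_at E hde {..<k} s (t i) (sym_z' i)"
  using local_at_lift[of "Ez' i" "t i"] unfolding sym_z'_def by simp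

lemma enc_N_less: "e \<in> E \<Longrightarrow> enc_N e X u < asize cap n e"
  using F_less[of "EOld e"] by (simp add: enc_N_def)

lemma sym_less:
  assumes "i < k"
  shows "sym_a i M < 2 ^ n" "sym_x i a < 2 ^ n" "sym_y i a < 2 ^ n" "sym_z' i X u < 2 ^ n"
    "sym_b i x y z < 2 ^ n"
  using assms F_less[of "Ea i"] F_less[of "Ex i"] F_less[of "Ey i"] F_less[of "Ez' i"] F_less[of "Eb i"]
  by (simp_all add: sym_a_def sym_x_def sym_y_def sym_z'_def sym_b_def asize_G_cap_new)

lemma a_vec_in_blocks: "a_vec M \<in> Pi\<^sub>E {..<k} (\<lambda>_. {..<2 ^ n})"
  unfolding a_vec_def by (rule restrict_PiE_iff[THEN iffD2]) (simp add: sym_less)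

lemma b_vec_in_blocks: "b_vec u X err \<in> Pi\<^sub>E {..<k} (\<lambda>_. {..<2 ^ n})"
  unfolding b_vec_def by (rule restrict_PiE_iff[THEN iffD2]) (simp add: sym_less)

lemma F_run_at_S: "j < k \<Longrightarrow> F (Ea j) (run M X err) (\<lambda>_. M) = sym_a j M"
  using F_local[of "Ea j"] unfolding sym_a_def by (simp add: local_at_G_NS_eq[of E k hde s])

lemma F_run_at_A:
  assumes "e \<in> G_edges E k" "G_tl tle t e = NA j"
  shows "F e (run M X err) (\<lambda>_. M) = F e ((\<lambda>_. 0)(Ea j := sym_a j M)) (\<lambda>_. 0)"
proof -
  have "local_at (G_edges E k) (G_hd hde s) {0} (\<lambda>_. NS) (NA j) (F e)"
    using F_local[OF assms(1)] assms(2) by simp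
  then show ?thesis
  proof (rule local_at_G_eq)
    fix e' assume "e' \<in> G_edges E k" "G_hd hde s e' = NA j"
    then have "e' = Ea j" by (rule G_in_edges_NA)
    then show "run M X err e' = ((\<lambda>_. 0)(Ea j := sym_a j M)) e'" by (simp add: run_def)
  qed simp
qed

lemma F_run_at_B:
  assumes "j < k"
  shows "F (Eb j) (run M X err) (\<lambda>_. M) =
    sym_b j (run M X err (Ex j)) (run M X err (Ey j)) (run M X err (Ez' j))"
proof -
  have "local_at (G_edges E k) (G_hd hde s) {0} (\<lambda>_. NS) (NB j) (F (Eb j))"
    using F_local[of "Eb j"] assms by simp
  then show ?thesis unfolding sym_b_def
  proof (rule local_at_G_eq)
    fix e' assume "e' \<in> G_edges E k" "G_hd hde s e' = NB j"
    then have "e' \<in> {Ex j, Ey j, Ez' j}" by (rule G_in_edges_NB)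
    then show "run M X err e' = ((\<lambda>_. 0)(Ex j := run M X err (Ex j), Ey j := run M X err (Ey j),
        Ez' j := run M X err (Ez' j))) e'"
      by auto
  qed simp
qed

lemma F_run_at_N:
  assumes "e \<in> G_edges E k" "G_tl tle t e = NOld v"
  shows "F e (run M X err) (\<lambda>_. M) = F e (lift X (a_vec M)) (\<lambda>_. 0)"
proof -
  have "local_at (G_edges E k) (G_hd hde s) {0} (\<lambda>_. NS) (NOld v) (F e)"
    using F_local[OF assms(1)] assms(2) by simp
  then show ?thesis
  proof (rule local_at_G_eq)
    fix e' assume "e' \<in> G_edges E k" "G_hd hde s e' = NOld v"
    from G_in_edges_NOld[OF this] show "run M X err e' = lift X (a_vec M) e'"
      by (elim disjE bexE exE conjE) (simp_all add: run_def lift_def a_vec_def)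
  qed simp
qed

lemma run_consistent:
  assumes X: "consistent E enc_N (\<lambda>_. 0) X (a_vec M)"
    and err: "\<And>e. err e \<noteq> 0 \<Longrightarrow> \<exists>j<k. e \<in> {Ex j, Ey j, Ez' j}"
  shows "consistent (G_edges E k) F err (run M X err) (\<lambda>_. M)"
  unfolding consistent_def
proof
  have no_err: "err e = 0" if "\<forall>j. e \<notin> {Ex j, Ey j, Ez' j}" for e
    using err that by blast
  fix e assume e: "e \<in> G_edges E k"
  show "run M X err e = xor (F e (run M X err) (\<lambda>_. M)) (err e)"
  proof (cases e)
    case (EOld e')
    then show ?thesis using e X F_run_at_N[OF e] no_err
      by (simp add: run_def consistent_def enc_N_def)
  next
    case (Eb j)
    then show ?thesis using e F_run_at_B no_err
      by (simp add: run_def b_vec_def a_vec_def)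
  qed (use e F_run_at_S F_run_at_A F_run_at_N no_err in
        \<open>simp_all add: run_def sym_x_def sym_y_def sym_z_def sym_z'_def\<close>)
qed

lemma decode_run: "Gd 0 (run M X err) (\<lambda>_. M) = dec_T (b_vec (a_vec M) X err)"
proof -
  have "local_at (G_edges E k) (G_hd hde s) {0} (\<lambda>_. NS) NT (Gd 0)"
    using code by (simp add: is_code_def)
  then show ?thesis unfolding dec_T_def
  proof (rule local_at_G_eq)
    fix e assume "e \<in> G_edges E k" "G_hd hde s e = NT"
    then obtain i where "i < k" "e = Eb i" using G_in_edges_NT by blast
    then show "run M X err e = (case e of Eb i \<Rightarrow> b_vec (a_vec M) X err i | _ \<Rightarrow> 0)"
      by (simp add: run_def)
  qed simp
qed

end

locale acyclic_G_code = G_code E tle hde cap k n s t F Gd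
  for E :: "'e set" and tle hde :: "'e \<Rightarrow> 'v" and cap k n s t F Gd +
  assumes finite_E: "finite E" and acyclic_E: "acyclic_net E tle hde"
begin

definition correct_msgs :: "nat set" where
  "correct_msgs = {M \<in> {..<2 ^ (n * k)}. \<forall>err X. adm_err (G_cap cap) n (G_adm E k) err
     \<longrightarrow> consistent (G_edges E k) F err X (\<lambda>_. M) \<longrightarrow> Gd 0 X (\<lambda>_. M) = M}"

definition branch_err :: "('e gedge \<Rightarrow> nat) \<Rightarrow> bool" where
  "branch_err err \<longleftrightarrow> adm_err (G_cap cap) n (G_adm E k) err \<and>
     (\<forall>e. err e \<noteq> 0 \<longrightarrow> (\<exists>j<k. e \<in> {Ex j, Ey j, Ez' j}))"

definition outcomes :: "nat \<Rightarrow> (nat \<Rightarrow> nat) set" where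
  "outcomes M = {b_vec (a_vec M) X err | X err.
     consistent E enc_N (\<lambda>_. 0) X (a_vec M) \<and> branch_err err}"

definition rigid_msgs :: "nat set" where
  "rigid_msgs = {M \<in> correct_msgs. is_singleton (outcomes M)}"

lemma branch_err_zero: "branch_err (\<lambda>_. 0)"
  by (simp add: branch_err_def adm_err_def)

lemma branch_err_single:
  "i < k \<Longrightarrow> e \<in> {Ex i, Ey i, Ez' i} \<Longrightarrow> v < 2 ^ n \<Longrightarrow> branch_err ((\<lambda>_. 0)(e := v))"
  by (auto simp: branch_err_def adm_err_def asize_G_cap_new)

lemma N_run_exists: "\<exists>X. consistent E enc_N (\<lambda>_. 0) X u"
  by (rule acyclic_net_consistent_exists[OF finite_E acyclic_E]) (use enc_N_local in blast)

lemma dec_T_outcome: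
  assumes M: "M \<in> correct_msgs" and c: "c \<in> outcomes M"
  shows "dec_T c = M"
proof -
  obtain X err where "c = b_vec (a_vec M) X err" and X: "consistent E enc_N (\<lambda>_. 0) X (a_vec M)"
    and err: "branch_err err"
    using c by (auto simp: outcomes_def)
  moreover have "consistent (G_edges E k) F err (run M X err) (\<lambda>_. M)"
    using err by (intro run_consistent[OF X]) (simp add: branch_err_def)
  moreover have "adm_err (G_cap cap) n (G_adm E k) err" using err by (simp add: branch_err_def)
  ultimately have "Gd 0 (run M X err) (\<lambda>_. M) = M" using M unfolding correct_msgs_def by blast
  then show ?thesis using decode_run \<open>c = b_vec (a_vec M) X err\<close> by simp
qed

lemma outcomes_nonempty: "outcomes M \<noteq> {}"
  using N_run_exists[of "a_vec M"] branch_err_zero unfolding outcomes_def by blast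

lemma outcomes_subset_blocks: "outcomes M \<subseteq> Pi\<^sub>E {..<k} (\<lambda>_. {..<2 ^ n})"
  using b_vec_in_blocks by (auto simp: outcomes_def)

lemma card_rigid_msgs: "2 * card correct_msgs \<le> 2 ^ (n * k) + card rigid_msgs"
proof -
  have "2 * card correct_msgs \<le> card (Pi\<^sub>E {..<k} (\<lambda>_. {..<(2::nat) ^ n}))
      + card {M \<in> correct_msgs. is_singleton (outcomes M)}"
  proof (rule card_singleton_fibers_lower_bound)
    show "outcomes M \<inter> outcomes M' = {}" if "M \<in> correct_msgs" "M' \<in> correct_msgs" "M \<noteq> M'" for M M'
      using that dec_T_outcome by blast
  qed (simp_all add: finite_PiE correct_msgs_def outcomes_nonempty outcomes_subset_blocks)
  then show ?thesis by (simp add: card_blocks rigid_msgs_def)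
qed

text \<open>On a rigid message, \<open>b\<^sub>i\<close> is the symbol \<open>B\<^sub>i\<close> emits when the error on \<open>z'\<^sub>i\<close> zeroes it.\<close>

definition sym_b0 :: "nat \<Rightarrow> nat \<Rightarrow> nat" where
  "sym_b0 i a = sym_b i (sym_x i a) (sym_y i a) 0"

lemma rigid_b_vec:
  assumes M: "M \<in> rigid_msgs" and X: "consistent E enc_N (\<lambda>_. 0) X (a_vec M)"
    and err: "branch_err err" and i: "i < k"
  shows "b_vec (a_vec M) X err i = sym_b0 i (sym_a i M)"
proof -
  define err' where "err' = (\<lambda>_::'e gedge. 0::nat)(Ez' i := sym_z' i X (a_vec M))"
  have "branch_err err'" unfolding err'_def using i by (intro branch_err_single) (simp_all add: sym_less)
  then have "b_vec (a_vec M) X err \<in> outcomes M" "b_vec (a_vec M) X err' \<in> outcomes M"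
    using X err by (auto simp: outcomes_def)
  moreover have "is_singleton (outcomes M)" using M by (simp add: rigid_msgs_def)
  ultimately have "b_vec (a_vec M) X err i = b_vec (a_vec M) X err' i"
    by (metis is_singleton_the_elem singletonD)
  also have "\<dots> = sym_b0 i (sym_a i M)"
    using i by (simp add: b_vec_def err'_def sym_b0_def a_vec_def)
  finally show ?thesis .
qed

lemma rigid_msgs_eqI:
  assumes "M \<in> rigid_msgs" "M' \<in> rigid_msgs"
    and "\<forall>i<k. sym_b0 i (sym_a i M) = sym_b0 i (sym_a i M')"
  shows "M = M'"
proof -
  obtain X X' where X: "consistent E enc_N (\<lambda>_. 0) X (a_vec M)"
    and X': "consistent E enc_N (\<lambda>_. 0) X' (a_vec M')"
    using N_run_exists by blast
  have "b_vec (a_vec M) X (\<lambda>_. 0) = b_vec (a_vec M') X' (\<lambda>_. 0)"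
    using rigid_b_vec[OF assms(1) X branch_err_zero] rigid_b_vec[OF assms(2) X' branch_err_zero] assms(3)
    by (auto simp: b_vec_def restrict_def fun_eq_iff)
  moreover have "b_vec (a_vec M) X (\<lambda>_. 0) \<in> outcomes M" "b_vec (a_vec M') X' (\<lambda>_. 0) \<in> outcomes M'"
    using X X' branch_err_zero by (auto simp: outcomes_def)
  ultimately show ?thesis
    using assms(1,2) dec_T_outcome by (metis (no_types, lifting) mem_Collect_eq rigid_msgs_def)
qed

text \<open>Corrupting \<open>x\<^sub>i\<close> in the run of \<open>M\<close>, resp. \<open>y\<^sub>i\<close> in the run of \<open>M'\<close>, makes \<open>B\<^sub>i\<close> receive the
  same three symbols in both runs; rigidity then identifies its output with \<open>sym_b0\<close> of either
  message.\<close>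

lemma sym_b0_eq_if_sym_z'_eq:
  assumes M: "M \<in> rigid_msgs" and M': "M' \<in> rigid_msgs" and i: "i < k"
    and X: "consistent E enc_N (\<lambda>_. 0) X (a_vec M)"
    and X': "consistent E enc_N (\<lambda>_. 0) X' (a_vec M')"
    and z': "sym_z' i X (a_vec M) = sym_z' i X' (a_vec M')"
  shows "sym_b0 i (sym_a i M) = sym_b0 i (sym_a i M')"
proof -
  define a a' where "a = sym_a i M" and "a' = sym_a i M'"
  have u: "a_vec M i = a" "a_vec M' i = a'" using i by (simp_all add: a_vec_def a_def a'_def)
  define err err' where "err = (\<lambda>_::'e gedge. 0::nat)(Ex i := xor (sym_x i a) (sym_x i a'))"
    and "err' = (\<lambda>_::'e gedge. 0::nat)(Ey i := xor (sym_y i a') (sym_y i a))"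
  have "branch_err err" "branch_err err'"
    unfolding err_def err'_def using i
    by (simp_all add: branch_err_single xor_less_two_power sym_less)
  then have "b_vec (a_vec M) X err i = sym_b0 i a" "b_vec (a_vec M') X' err' i = sym_b0 i a'"
    using rigid_b_vec[OF M X _ i] rigid_b_vec[OF M' X' _ i] by (simp_all add: a_def a'_def)
  moreover have "b_vec (a_vec M) X err i = b_vec (a_vec M') X' err' i"
    using i z' by (simp add: b_vec_def u err_def err'_def xor_cancel_left)
  ultimately show ?thesis by (simp add: a_def a'_def)
qed

text \<open>\<open>t\<^sub>i\<close> sees only \<open>z'\<^sub>i\<close>. It picks any rigid message producing the same symbol there, which
  determines \<open>sym_b0 i\<close> of the \<open>a\<^sub>i\<close>-symbol, and returns a fixed preimage of it; decoding is correct
  whenever the \<open>a\<^sub>i\<close>-symbols are these preimages.\<close>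

definition rep :: "nat \<Rightarrow> nat \<Rightarrow> nat" where
  "rep i = inv_into {..<2 ^ n} (sym_b0 i)"

definition reps :: "(nat \<Rightarrow> nat) set" where
  "reps = Pi\<^sub>E {..<k} (\<lambda>i. rep i ` sym_b0 i ` {..<2 ^ n})"

definition dec_N :: "nat \<Rightarrow> ('e \<Rightarrow> nat) \<Rightarrow> (nat \<Rightarrow> nat) \<Rightarrow> nat" where
  "dec_N i X u = rep i (sym_b0 i (sym_a i (SOME M'. M' \<in> rigid_msgs \<and>
     (\<exists>X'. consistent E enc_N (\<lambda>_. 0) X' (a_vec M') \<and> sym_z' i X' (a_vec M') = sym_z' i X u))))"

lemma is_code_N: "is_code E tle hde cap n {..<k} s {..<k} t enc_N dec_N"
  unfolding is_code_def
proof (intro conjI ballI allI)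
  fix i assume i: "i \<in> {..<k}"
  show "local_at E hde {..<k} s (t i) (dec_N i)"
    unfolding local_at_def
  proof (intro allI impI)
    fix X Y :: "'e \<Rightarrow> nat" and u u' :: "nat \<Rightarrow> nat"
    assume agree: "\<forall>e\<in>E. hde e = t i \<longrightarrow> X e = Y e" "\<forall>j\<in>{..<k}. s j = t i \<longrightarrow> u j = u' j"
    have "local_at E hde {..<k} s (t i) (sym_z' i)" using i by (simp add: sym_z'_local)
    then have "sym_z' i X u = sym_z' i Y u'" using agree by (rule local_atD)
    then show "dec_N i X u = dec_N i Y u'" by (simp add: dec_N_def)
  qed
qed (simp_all add: enc_N_local enc_N_less)

lemma dec_N_correct:
  assumes M: "M \<in> rigid_msgs" "a_vec M \<in> reps"
    and X: "consistent E enc_N (\<lambda>_. 0) X (a_vec M)" and i: "i < k"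
  shows "dec_N i X (a_vec M) = a_vec M i"
proof -
  define P where "P M' \<longleftrightarrow> M' \<in> rigid_msgs \<and>
     (\<exists>X'. consistent E enc_N (\<lambda>_. 0) X' (a_vec M') \<and> sym_z' i X' (a_vec M') = sym_z' i X (a_vec M))"
    for M'
  define M' where "M' = (SOME M'. P M')"
  have "P M" using M X unfolding P_def by blast
  then have "P M'" unfolding M'_def by (rule someI)
  then obtain X' where "M' \<in> rigid_msgs" "consistent E enc_N (\<lambda>_. 0) X' (a_vec M')"
    "sym_z' i X' (a_vec M') = sym_z' i X (a_vec M)" unfolding P_def by blast
  then have "sym_b0 i (sym_a i M') = sym_b0 i (a_vec M i)"
    using sym_b0_eq_if_sym_z'_eq[OF _ M(1) i _ X] i by (simp add: a_vec_def)
  moreover have "dec_N i X (a_vec M) = rep i (sym_b0 i (sym_a i M'))"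
    unfolding dec_N_def M'_def P_def ..
  moreover have "a_vec M i \<in> rep i ` sym_b0 i ` {..<2 ^ n}" using M(2) i by (auto simp: reps_def)
  ultimately show ?thesis unfolding rep_def by (simp add: inv_into_f_eq_on_representatives)
qed

lemma card_rigid_msgs_le_reps: "card rigid_msgs \<le> card reps"
proof -
  let ?B = "Pi\<^sub>E {..<k} (\<lambda>i. sym_b0 i ` {..<2 ^ n})"
  let ?\<beta> = "\<lambda>M. restrict (\<lambda>i. sym_b0 i (sym_a i M)) {..<k}"
  have "inj_on ?\<beta> rigid_msgs"
  proof (rule inj_onI)
    fix M M' assume M: "M \<in> rigid_msgs" "M' \<in> rigid_msgs" and eq: "?\<beta> M = ?\<beta> M'"
    have "sym_b0 i (sym_a i M) = sym_b0 i (sym_a i M')" if "i < k" for i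
      using fun_cong[OF eq, of i] that by simp
    then show "M = M'" using M by (blast intro: rigid_msgs_eqI)
  qed
  then have "card rigid_msgs = card (?\<beta> ` rigid_msgs)" by (simp add: card_image)
  also have "\<dots> \<le> card ?B"
  proof (rule card_mono)
    show "?\<beta> ` rigid_msgs \<subseteq> ?B"
    proof
      fix b assume "b \<in> ?\<beta> ` rigid_msgs"
      then obtain M where "b = ?\<beta> M" by blast
      moreover have "sym_b0 i (sym_a i M) \<in> sym_b0 i ` {..<2 ^ n}" if "i < k" for i
        using sym_less(1)[OF that] by blast
      ultimately show "b \<in> ?B" by simp
    qed
  qed (simp add: finite_PiE)
  also have "card ?B = card reps"
    unfolding reps_def rep_def card_PiE[OF finite_lessThan]
    by (intro prod.cong refl card_image[symmetric] inj_on_inv_into subset_refl)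
  finally show ?thesis .
qed

lemma card_rigid_msgs_reps: "2 * card rigid_msgs \<le> 2 ^ (n * k) + card (a_vec ` rigid_msgs \<inter> reps)"
proof -
  have "inj_on a_vec rigid_msgs"
  proof (rule inj_onI)
    fix M M' assume M: "M \<in> rigid_msgs" "M' \<in> rigid_msgs" and eq: "a_vec M = a_vec M'"
    have "sym_b0 i (sym_a i M) = sym_b0 i (sym_a i M')" if "i < k" for i
      using fun_cong[OF eq, of i] that by (simp add: a_vec_def)
    then show "M = M'" using M by (blast intro: rigid_msgs_eqI)
  qed
  then have "card (a_vec ` rigid_msgs) = card rigid_msgs" by (rule card_image)
  moreover have "card (a_vec ` rigid_msgs) + card reps
      \<le> card (Pi\<^sub>E {..<k} (\<lambda>_. {..<(2::nat) ^ n})) + card (a_vec ` rigid_msgs \<inter> reps)"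
  proof (rule card_Int_lower_bound)
    show "a_vec ` rigid_msgs \<subseteq> Pi\<^sub>E {..<k} (\<lambda>_. {..<2 ^ n})" using a_vec_in_blocks by blast
    show "reps \<subseteq> Pi\<^sub>E {..<k} (\<lambda>_. {..<2 ^ n})"
      unfolding reps_def rep_def by (intro PiE_mono image_subsetI inv_into_into)
  qed (simp add: finite_PiE)
  ultimately show ?thesis using card_rigid_msgs_le_reps card_blocks[of k n] by linarith
qed

lemma mu_code_from_ec_code:
  "\<exists>f g. is_code E tle hde cap n {..<k} s {..<k} t f g \<and>
     4 * card correct_msgs \<le> 3 * 2 ^ (n * k) + card {m \<in> Pi\<^sub>E {..<k} (\<lambda>_. {..<2 ^ n}).
       \<forall>X. consistent E f (\<lambda>_. 0) X m \<longrightarrow> (\<forall>i<k. g i X m = m i)}"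
proof (intro exI conjI)
  let ?S = "{m \<in> Pi\<^sub>E {..<k} (\<lambda>_. {..<2 ^ n}).
     \<forall>X. consistent E enc_N (\<lambda>_. 0) X m \<longrightarrow> (\<forall>i<k. dec_N i X m = m i)}"
  have "a_vec ` rigid_msgs \<inter> reps \<subseteq> ?S"
  proof
    fix m assume "m \<in> a_vec ` rigid_msgs \<inter> reps"
    then obtain M where M: "M \<in> rigid_msgs" "a_vec M \<in> reps" and m: "m = a_vec M" by blast
    have "\<forall>X. consistent E enc_N (\<lambda>_. 0) X m \<longrightarrow> (\<forall>i<k. dec_N i X m = m i)"
      unfolding m using dec_N_correct[OF M] by blast
    then show "m \<in> ?S" using a_vec_in_blocks m by blast
  qed
  then have "card (a_vec ` rigid_msgs \<inter> reps) \<le> card ?S" by (rule card_mono[rotated]) (simp add: finite_PiE)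
  then show "4 * card correct_msgs \<le> 3 * 2 ^ (n * k) + card ?S"
    using card_rigid_msgs card_rigid_msgs_reps by linarith
qed (rule is_code_N)

end

lemma mu_feasible_if_ec_feasible:
  fixes E :: "'e set" and tle hde :: "'e \<Rightarrow> 'v"
  assumes "finite E" "acyclic_net E tle hde"
    and ec: "ec_feasible (G_edges E k) (G_tl tle t) (G_hd hde s) (G_cap cap) NS NT (G_adm E k) (real k)"
  shows "mu_feasible E tle hde cap k s t 1"
  unfolding mu_feasible_def
proof (intro allI impI)
  fix \<epsilon> :: real assume "\<epsilon> > 0"
  then have "\<epsilon> / 4 > 0" by simp
  then obtain n F Gd where n: "n > 0"
    and code: "is_code (G_edges E k) (G_tl tle t) (G_hd hde s) (G_cap cap) n {0} (\<lambda>_. NS) {0} (\<lambda>_. NT) F Gd"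
    and card: "(1 - \<epsilon> / 4) * real (msize n (real k)) \<le> real (card {M \<in> {..<msize n (real k)}.
                 \<forall>err X. adm_err (G_cap cap) n (G_adm E k) err \<longrightarrow> consistent (G_edges E k) F err X (\<lambda>_. M)
                    \<longrightarrow> Gd 0 X (\<lambda>_. M) = M})"
    using ec unfolding ec_feasible_def by blast
  interpret acyclic_G_code E tle hde cap k n s t F Gd
    using code assms(1,2) by unfold_locales
  obtain f g where fg: "is_code E tle hde cap n {..<k} s {..<k} t f g"
    and card': "4 * card correct_msgs \<le> 3 * 2 ^ (n * k) + card {m \<in> Pi\<^sub>E {..<k} (\<lambda>_. {..<2 ^ n}).
       \<forall>X. consistent E f (\<lambda>_. 0) X m \<longrightarrow> (\<forall>i<k. g i X m = m i)}"
    using mu_code_from_ec_code by blast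
  define S where "S = {m \<in> Pi\<^sub>E {..<k} (\<lambda>_. {..<msize n 1}).
                   \<forall>X. consistent E f (\<lambda>_. 0) X m \<longrightarrow> (\<forall>i<k. g i X m = m i)}"
  define x :: real where "x = 2 ^ (n * k)"
  have "(1 - \<epsilon> / 4) * x \<le> real (card correct_msgs)"
    using card unfolding msize_of_nat correct_msgs_def x_def by simp
  moreover have "4 * real (card correct_msgs) \<le> 3 * x + real (card S)"
    using of_nat_mono[OF card', where 'a=real] msize_of_nat[of n 1] unfolding S_def x_def by simp
  moreover have "(1 - \<epsilon>) * x = 4 * ((1 - \<epsilon> / 4) * x) - 3 * x" by (simp add: algebra_simps)
  ultimately have "(1 - \<epsilon>) * real (card (Pi\<^sub>E {..<k} (\<lambda>_. {..<msize n 1}))) \<le> real (card S)"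
    using msize_of_nat[of n 1] card_blocks[of k n] unfolding x_def by simp
  then show "\<exists>n>0. \<exists>f g. is_code E tle hde cap n {..<k} s {..<k} t f g \<and>
        real (card {m \<in> Pi\<^sub>E {..<k} (\<lambda>_. {..<msize n 1}).
                 \<forall>X. consistent E f (\<lambda>_. 0) X m \<longrightarrow> (\<forall>i<k. g i X m = m i)})
          \<ge> (1 - \<epsilon>) * real (card (Pi\<^sub>E {..<k} (\<lambda>_. {..<msize n 1})))"
    using n fg unfolding S_def by blast
qed

theorem theorem1:
  fixes E :: "'e set" and tle hde :: "'e \<Rightarrow> 'v" and cap :: "'e \<Rightarrow> real"
    and k :: nat and s t :: "nat \<Rightarrow> 'v"
  assumes "finite E"
    and "acyclic_net E tle hde"
    and "\<forall>e\<in>E. cap e \<ge> 0"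
  shows "ec_feasible (G_edges E k) (G_tl tle t) (G_hd hde s) (G_cap cap) NS NT (G_adm E k) (real k)
     \<longleftrightarrow> mu_feasible E tle hde cap k s t 1"
  using ec_feasible_if_mu_feasible mu_feasible_if_ec_feasible[OF assms(1,2)] by blast

end
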